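(* Let $M\in\mathbb{R}^{d\times d}$ be a symmetric positive semidefinite matrix of rank $k$, and let $\sigma_{\min}(M)$ denote its smallest nonzero singular value. Let $\hat M=M+E$ be a symmetric matrix with $\epsilon:=\|E\|\le\sigma_{\min}(M)/4$. Let the truncated (top-$k$) SVDs of $M$ and $\hat M$ be $UDU^\top$ and $\hat U\hat D\hat U^\top$ respectively, where $U,\hat U\in\mathbb{R}^{d\times k}$ have orthonormal columns and $D,\hat D\in\mathbb{R}^{k\times k}$ are diagonal. Then there exists an orthogonal matrix $R\in\mathbb{R}^{k\times k}$ such that, setting $W:=UD^{-1/2}R$, $\hat W:=\hat U\hat D^{-1/2}$, $B:=UD^{1/2}R$, $\hat B:=\hat U\hat D^{1/2}$, $$\|W-\hat W\|\le\frac{5\epsilon}{\sigma_{\min}(M)^{3/2}},\qquad \|B^\top(W-\hat W)\|\le\frac{3\epsilon}{\sigma_{\min}(M)},\qquad \|B-\hat B\|\le\frac{3\epsilon\sqrt{\|M\|}}{\sigma_{\min}(M)}.$$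
   Context: $\|\cdot\|$ denotes the spectral (operator) norm of a matrix. *)

theory Defs
  imports "HOL-Analysis.Analysis"
begin

definition spec_norm :: "real^'n^'m \<Rightarrow> real" where
  "spec_norm A = onorm (\<lambda>x. A *v x)"

definition symmetric_mat :: "real^'n^'n \<Rightarrow> bool" where
  "symmetric_mat A \<longleftrightarrow> transpose A = A"

definition psd_mat :: "real^'n^'n \<Rightarrow> bool" where
  "psd_mat A \<longleftrightarrow> symmetric_mat A \<and> (\<forall>x. 0 \<le> x \<bullet> (A *v x))"

definition diagonal_mat :: "real^'n^'n \<Rightarrow> bool" where
  "diagonal_mat A \<longleftrightarrow> (\<forall>i j. i \<noteq> j \<longrightarrow> A $ i $ j = 0)"

definition singular_value :: "real^'n^'m \<Rightarrow> real \<Rightarrow> bool" where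
  "singular_value A s \<longleftrightarrow> 0 \<le> s \<and>
     (\<exists>v. v \<noteq> 0 \<and> (transpose A ** A) *v v = (s^2) *\<^sub>R v)"

definition sigma_min :: "real^'n^'m \<Rightarrow> real" where
  "sigma_min A = Inf {s. 0 < s \<and> singular_value A s}"

definition diag_powr :: "real^'k^'k \<Rightarrow> real \<Rightarrow> real^'k^'k" where
  "diag_powr D p = (\<chi> i j. if i = j then (D $ i $ i) powr p else 0)"

text \<open>(U, D) give a truncated top-k SVD  U D U^T  of the square matrix A:
  there is a full SVD A = P S Q^T (P, Q orthogonal, S diagonal with nonnegative
  entries), and an injective selection f of k indices carrying the k largest
  singular values, such that the selected left and right singular vectors agree
  (so the truncation has the form U D U^T), U consists of the selected columns of P,
  and D is the diagonal matrix of the selected singular values.\<close>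
definition trunc_svd :: "real^'d^'d \<Rightarrow> real^'k^'d \<Rightarrow> real^'k^'k \<Rightarrow> bool" where
  "trunc_svd A U D \<longleftrightarrow>
     (\<exists>P Q S f. orthogonal_matrix P \<and> orthogonal_matrix Q \<and> diagonal_mat S \<and>
        (\<forall>i. 0 \<le> S $ i $ i) \<and> A = P ** S ** transpose Q \<and> inj f \<and>
        (\<forall>i j. i \<notin> range f \<longrightarrow> S $ i $ i \<le> S $ f j $ f j) \<and>
        (\<forall>j r. Q $ r $ f j = P $ r $ f j) \<and>
        (\<forall>j r. U $ r $ j = P $ r $ f j) \<and>
        D = (\<chi> i j. if i = j then S $ f i $ f i else 0))"

end

theory Submission
  imports Defs
begin

(* The truncated SVDs give M = U D U' and Mh Uh = Uh Dh with D = diag d,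
   Dh = diag b, and Weyl's inequality gives b >= sigma - eps.  Split Uh = U H + Y with
   H = U' Uh and Y orthogonal to the range of U.  As (I - U U') M = 0, the residual satisfies
   Y Dh = (I - U U') (Mh - M) Uh, so ||Y|| <= delta = eps / (sigma - eps); hence H is an
   almost isometry, and its polar factor R is orthogonal with ||R - H|| <= delta^2.
   The matrix Z = D^(1/2) H - H Dh^(1/2) solves the Sylvester equation
   D^(1/2) Z + Z Dh^(1/2) = U' (M - Mh) Uh, so ||Z|| <= eps / sqrt sigma.  Expressing
   W - Wh, B' (W - Wh) and B - Bh through R - H, Z and Y and collecting constants gives
   the three bounds. *)

declare transpose_matrix_vector [simp del]

section \<open>Spectral norm and matrices with orthonormal columns\<close>

lemma inner_matrix_vector_transpose:
  "(A *v x) \<bullet> (y::real^'m) = x \<bullet> (transpose A *v y)"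
  by (metis dot_lmul_matrix inner_commute transpose_matrix_vector)

lemma inner_symmetric_mat:
  "symmetric_mat G \<Longrightarrow> (G *v x) \<bullet> y = x \<bullet> (G *v y)"
  unfolding symmetric_mat_def by (metis inner_matrix_vector_transpose)

lemma symmetric_mat_transpose_mult_self: "symmetric_mat (transpose A ** A)"
  unfolding symmetric_mat_def by (simp add: matrix_transpose_mul)

lemma norm_le_spec_norm: "norm (A *v x) \<le> spec_norm A * norm x"
  unfolding spec_norm_def by (rule onorm[OF matrix_vector_mul_bounded_linear])

lemma spec_norm_le: "(\<And>x. norm (A *v x) \<le> c * norm x) \<Longrightarrow> spec_norm A \<le> c"
  unfolding spec_norm_def by (rule onorm_le)

lemma spec_norm_nonneg: "0 \<le> spec_norm A"
  unfolding spec_norm_def by (rule onorm_pos_le[OF matrix_vector_mul_bounded_linear])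

lemma norm_le_spec_norm_bound:
  "spec_norm A \<le> c \<Longrightarrow> norm (A *v x) \<le> c * norm x"
  by (meson mult_right_mono norm_ge_zero norm_le_spec_norm order_trans)

lemma isometry_mult_vec_cancel:
  "transpose U ** U = mat 1 \<Longrightarrow> transpose U *v (U *v x) = x"
  by (simp add: matrix_vector_mul_assoc)

lemma norm_isometry_mult_vec:
  fixes U :: "real^'k^'d"
  assumes "transpose U ** U = mat 1"
  shows "norm (U *v x) = norm x"
proof -
  have "(U *v x) \<bullet> (U *v x) = x \<bullet> x"
    by (simp add: inner_matrix_vector_transpose isometry_mult_vec_cancel assms)
  then show ?thesis by (simp add: norm_eq_sqrt_inner)
qed

lemma norm_isometry_transpose_mult_vec_le:
  fixes U :: "real^'k^'d"
  assumes U: "transpose U ** U = mat 1"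
  shows "norm (transpose U *v y) \<le> norm y"
proof -
  have "(norm (transpose U *v y))\<^sup>2 = y \<bullet> (U *v (transpose U *v y))"
    by (simp add: power2_norm_eq_inner inner_matrix_vector_transpose inner_commute)
  also have "\<dots> \<le> norm y * norm (transpose U *v y)"
    using Cauchy_Schwarz_ineq2[of y] norm_isometry_mult_vec[OF U] by (metis abs_ge_self order_trans)
  finally show ?thesis
    by (cases "transpose U *v y = 0") (auto simp: power2_eq_square)
qed

lemma norm_isometry_add_orthogonal:
  fixes U :: "real^'k^'d"
  assumes U: "transpose U ** U = mat 1" and z: "transpose U *v z = 0"
  shows "(norm (U *v a + z))\<^sup>2 = (norm a)\<^sup>2 + (norm z)\<^sup>2"
proof -
  have "(U *v a) \<bullet> z = 0" by (simp add: inner_matrix_vector_transpose z)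
  then show ?thesis
    by (simp add: power2_norm_eq_inner inner_add_left inner_add_right inner_commute
        flip: norm_isometry_mult_vec[OF U, of a])
qed

lemma norm_isometry_proj_complement_le:
  fixes U :: "real^'k^'d"
  assumes U: "transpose U ** U = mat 1"
  shows "norm (y - U *v (transpose U *v y)) \<le> norm y"
proof -
  have "transpose U *v (y - U *v (transpose U *v y)) = 0"
    by (simp add: matrix_vector_mult_diff_distrib isometry_mult_vec_cancel[OF U])
  from norm_isometry_add_orthogonal[OF U this, of "transpose U *v y"]
  have "(norm y)\<^sup>2 = (norm (transpose U *v y))\<^sup>2 + (norm (y - U *v (transpose U *v y)))\<^sup>2"
    by simp
  then show ?thesis
    by (metis le_add_same_cancel2 norm_ge_zero power2_le_imp_le zero_le_power2)
qed

lemma norm_isometry_diff_le: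
  fixes U :: "real^'k^'d"
  assumes "transpose U ** U = mat 1"
  shows "norm (U *v (a - c) - e) \<le> norm a + norm c + norm e"
  using norm_triangle_ineq4[of "U *v (a - c)" e] norm_triangle_ineq4[of a c]
  by (simp add: norm_isometry_mult_vec[OF assms])

section \<open>Diagonal matrices\<close>

definition diag_mat :: "('n::finite \<Rightarrow> real) \<Rightarrow> real^'n^'n" where
  "diag_mat a = (\<chi> i j. if i = j then a i else 0)"

lemma diag_mat_mult_vec: "diag_mat a *v x = (\<chi> i. a i * x $ i)"
  unfolding diag_mat_def matrix_vector_mult_def
  by (simp add: vec_eq_iff if_distrib[of "\<lambda>u. u * _"] cong: if_cong)

lemma diag_mat_mult_diag_mat: "diag_mat a ** diag_mat b = diag_mat (\<lambda>i. a i * b i)"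
  unfolding diag_mat_def matrix_matrix_mult_def
  by (simp add: vec_eq_iff if_distrib[of "\<lambda>u. u * _"] if_distrib[of "\<lambda>u. _ * u"] cong: if_cong)

lemma diag_mat_mult_vec_diag_mat:
  "diag_mat a *v (diag_mat b *v x) = diag_mat (\<lambda>i. a i * b i) *v x"
  by (simp add: matrix_vector_mul_assoc diag_mat_mult_diag_mat)

lemma transpose_diag_mat [simp]: "transpose (diag_mat a) = diag_mat a"
  unfolding diag_mat_def transpose_def by (simp add: vec_eq_iff)

lemma diag_mat_1: "diag_mat (\<lambda>_. 1) = mat 1"
  unfolding diag_mat_def mat_def by (simp add: vec_eq_iff)

lemma diag_mat_axis: "diag_mat a *v axis j 1 = a j *\<^sub>R axis j 1"
  by (simp add: diag_mat_mult_vec vec_eq_iff axis_def)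

lemma diagonal_mat_eq_diag_mat: "diagonal_mat S \<Longrightarrow> S = diag_mat (\<lambda>i. S $ i $ i)"
  unfolding diagonal_mat_def diag_mat_def by (auto simp: vec_eq_iff)

lemma diag_powr_diag_mat: "diag_powr (diag_mat a) p = diag_mat (\<lambda>i. a i powr p)"
  by (simp add: diag_powr_def diag_mat_def vec_eq_iff)

lemma norm_diag_mat_le_on_support:
  assumes "\<And>i. x $ i \<noteq> 0 \<Longrightarrow> \<bar>a i\<bar> \<le> c" and "0 \<le> c"
  shows "norm (diag_mat a *v x) \<le> c * norm x"
proof -
  have "(a i * x $ i)\<^sup>2 \<le> (c * x $ i)\<^sup>2" for i
  proof (cases "x $ i = 0")
    case False
    then have "(a i)\<^sup>2 \<le> c\<^sup>2" using assms by (metis abs_le_square_iff abs_of_nonneg)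
    then show ?thesis by (simp add: power_mult_distrib mult_right_mono)
  qed simp
  then have "(diag_mat a *v x) \<bullet> (diag_mat a *v x) \<le> (c *\<^sub>R x) \<bullet> (c *\<^sub>R x)"
    unfolding diag_mat_mult_vec inner_vec_def by (intro sum_mono) (simp add: power2_eq_square)
  then have "norm (diag_mat a *v x) \<le> norm (c *\<^sub>R x)" by (simp only: norm_le)
  then show ?thesis using \<open>0 \<le> c\<close> by simp
qed

lemma norm_diag_mat_le:
  "(\<And>i. \<bar>a i\<bar> \<le> c) \<Longrightarrow> norm (diag_mat a *v x) \<le> c * norm x"
  by (rule norm_diag_mat_le_on_support) (auto intro: order_trans[OF abs_ge_zero])

lemma norm_diag_mat_ge:
  assumes "\<And>i. m \<le> \<bar>a i\<bar>" and "0 \<le> m"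
  shows "m * norm x \<le> norm (diag_mat a *v x)"
proof -
  have "m\<^sup>2 \<le> (a i)\<^sup>2" for i using assms by (metis abs_le_square_iff abs_of_nonneg)
  then have "(m * x $ i)\<^sup>2 \<le> (a i * x $ i)\<^sup>2" for i
    by (simp add: power_mult_distrib mult_right_mono)
  then have "(m *\<^sub>R x) \<bullet> (m *\<^sub>R x) \<le> (diag_mat a *v x) \<bullet> (diag_mat a *v x)"
    unfolding diag_mat_mult_vec inner_vec_def by (intro sum_mono) (simp add: power2_eq_square)
  then have "norm (m *\<^sub>R x) \<le> norm (diag_mat a *v x)" by (simp only: norm_le)
  then show ?thesis using \<open>0 \<le> m\<close> by simp
qed

lemma inner_diag_mat_ge:
  "(\<And>i. c \<le> a i) \<Longrightarrow> c * (x \<bullet> x) \<le> x \<bullet> (diag_mat a *v x)"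
  unfolding diag_mat_mult_vec inner_vec_def sum_distrib_left
  by (intro sum_mono) (simp add: mult_right_mono mult.left_commute)

lemma rank_diag_mat: "rank (diag_mat a :: real^'n^'n) = card {i. a i \<noteq> 0}"
proof -
  define A :: "(real^'n) set" where "A = (\<lambda>i. axis i 1) ` {i. a i \<noteq> 0}"
  have card_A: "card A = card {i. a i \<noteq> 0}"
    unfolding A_def by (rule card_image) (auto simp: inj_on_def axis_eq_axis)
  have "range ((*v) (diag_mat a)) \<subseteq> span A"
  proof
    fix y assume "y \<in> range ((*v) (diag_mat a))"
    then obtain x where "y = diag_mat a *v x" by auto
    then have "y = (\<Sum>i\<in>{i. a i \<noteq> 0}. (a i * x $ i) *\<^sub>R axis i 1)"
      by (auto simp: vec_eq_iff axis_def diag_mat_mult_vec if_distrib[of "\<lambda>u. _ * u"]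
          cong: if_cong)
    also have "\<dots> \<in> span A"
      by (intro span_sum span_scale span_base) (auto simp: A_def)
    finally show "y \<in> span A" .
  qed
  then have upper: "dim (range ((*v) (diag_mat a))) \<le> card A" by (rule dim_le_card) (simp add: A_def)
  have "A \<subseteq> range ((*v) (diag_mat a))"
  proof
    fix y assume "y \<in> A"
    then obtain i where "a i \<noteq> 0" "y = axis i 1" unfolding A_def by auto
    then have "diag_mat a *v axis i (1 / a i) = y" by (simp add: diag_mat_mult_vec vec_eq_iff axis_def)
    then show "y \<in> range ((*v) (diag_mat a))" by (metis rangeI)
  qed
  moreover have "independent A"
    by (rule independent_mono[OF independent_Basis]) (auto simp: A_def axis_in_Basis_iff)
  ultimately have "card A \<le> dim (range ((*v) (diag_mat a)))"
    by (rule independent_card_le_dim)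
  with upper show ?thesis unfolding rank_dim_range card_A by simp
qed

lemma orthogonal_conj_diag_mat_mult:
  assumes "orthogonal_matrix V"
  shows "(V ** diag_mat a ** transpose V) ** (V ** diag_mat b ** transpose V)
    = V ** diag_mat (\<lambda>i. a i * b i) ** transpose V"
proof -
  have "(V ** diag_mat a ** transpose V) ** (V ** diag_mat b ** transpose V)
    = V ** (diag_mat a ** (transpose V ** V) ** diag_mat b) ** transpose V"
    by (simp add: matrix_mul_assoc)
  then show ?thesis using assms by (simp add: orthogonal_matrix_def diag_mat_mult_diag_mat)
qed

lemma orthogonal_conj_diag_mat_1:
  "orthogonal_matrix V \<Longrightarrow> V ** diag_mat (\<lambda>_. 1) ** transpose V = mat 1"
  by (simp add: diag_mat_1 orthogonal_matrix_def)

lemma norm_orthogonal_conj_diag_mat_le: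
  assumes V: "orthogonal_matrix V" and bound: "\<And>i. \<bar>a i\<bar> \<le> c"
  shows "norm ((V ** diag_mat a ** transpose V) *v x) \<le> c * norm x"
proof -
  have "transpose V ** V = mat 1" "transpose (transpose V) ** transpose V = mat 1"
    using V by (auto simp: orthogonal_matrix_def)
  then show ?thesis
    using norm_diag_mat_le[OF bound, where x = "transpose V *v x"]
    by (simp add: matrix_vector_mul_assoc[symmetric] norm_isometry_mult_vec)
qed

section \<open>Rayleigh quotients and the spectral theorem\<close>

lemma quadratic_nonpos_imp_linear_coeff_zero:
  fixes a c :: real
  assumes "\<And>t. 2 * t * a + t\<^sup>2 * c \<le> 0"
  shows "a = 0"
proof (rule ccontr)
  assume "a \<noteq> 0"
  define k where "k = \<bar>c\<bar> + 1"
  have "k > 0" "2 * k + c > 0" unfolding k_def by auto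
  have "2 * (a / k) * a + (a / k)\<^sup>2 * c = a\<^sup>2 * (2 * k + c) / k\<^sup>2"
    using \<open>k > 0\<close> by (simp add: field_simps power2_eq_square)
  also have "\<dots> > 0"
    using \<open>a \<noteq> 0\<close> \<open>k > 0\<close> \<open>2 * k + c > 0\<close> by (intro divide_pos_pos mult_pos_pos) auto
  finally show False using assms[of "a / k"] by linarith
qed

lemma rayleigh_quotient_attains_max:
  fixes G :: "real^'n^'n"
  assumes S: "subspace S" and y: "y \<in> S" "y \<noteq> 0"
  shows "\<exists>v\<in>S. norm v = 1 \<and> (\<forall>x\<in>S. x \<bullet> (G *v x) \<le> (v \<bullet> (G *v v)) * (norm x)\<^sup>2)"
proof -
  define K where "K = S \<inter> sphere 0 1"
  have "compact K" unfolding K_def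
    by (intro closed_Int_compact closed_subspace S compact_sphere)
  moreover have "y /\<^sub>R norm y \<in> K"
    using y S unfolding K_def by (auto simp: subspace_scale)
  moreover have "continuous_on K (\<lambda>x. x \<bullet> (G *v x))"
    by (intro continuous_intros linear_continuous_on matrix_vector_mul_bounded_linear)
  ultimately obtain v where v: "v \<in> K" and max: "\<And>y. y \<in> K \<Longrightarrow> y \<bullet> (G *v y) \<le> v \<bullet> (G *v v)"
    using continuous_attains_sup[of K] by blast
  have "x \<bullet> (G *v x) \<le> (v \<bullet> (G *v v)) * (norm x)\<^sup>2" if "x \<in> S" "x \<noteq> 0" for x
  proof -
    have "x /\<^sub>R norm x \<in> K" using that S unfolding K_def by (auto simp: subspace_scale)
    from max[OF this] have "(x \<bullet> (G *v x)) / (norm x)\<^sup>2 \<le> v \<bullet> (G *v v)"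
      by (simp add: matrix_vector_mult_scaleR power2_eq_square divide_inverse mult_ac)
    with \<open>x \<noteq> 0\<close> show ?thesis by (simp add: divide_le_eq mult.commute)
  qed
  moreover have "v \<in> S" "norm v = 1" using v unfolding K_def by auto
  ultimately show ?thesis by (metis inner_zero_left norm_zero order_refl power2_eq_square mult_zero_right)
qed

text \<open>The first variation of the Rayleigh quotient at a maximiser vanishes in every direction
  of the invariant subspace, in particular in the direction of the residual G v - l v.\<close>

lemma rayleigh_max_is_eigenvector:
  fixes G :: "real^'n^'n"
  assumes sym: "symmetric_mat G" and S: "subspace S" and inv: "\<And>x. x \<in> S \<Longrightarrow> G *v x \<in> S"
    and v: "v \<in> S" "norm v = 1"
    and max: "\<And>x. x \<in> S \<Longrightarrow> x \<bullet> (G *v x) \<le> (v \<bullet> (G *v v)) * (norm x)\<^sup>2"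
  shows "G *v v = (v \<bullet> (G *v v)) *\<^sub>R v"
proof -
  define l where "l = v \<bullet> (G *v v)"
  define w where "w = G *v v - l *\<^sub>R v"
  have vv: "v \<bullet> v = 1" using v by (simp add: norm_eq_sqrt_inner)
  have "w \<in> S" unfolding w_def using inv v S by (simp add: subspace_diff subspace_scale)
  have vw: "v \<bullet> w = 0" unfolding w_def l_def by (simp add: inner_diff_right vv)
  have wGv: "w \<bullet> (G *v v) = w \<bullet> w" "v \<bullet> (G *v w) = w \<bullet> w"
    using vw inner_symmetric_mat[OF sym, of v w]
    by (auto simp: w_def inner_diff_left inner_diff_right l_def inner_commute vv)
  have "2 * t * (w \<bullet> w) + t\<^sup>2 * (w \<bullet> (G *v w) - l * (w \<bullet> w)) \<le> 0" for t
  proof -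
    have "v + t *\<^sub>R w \<in> S" using v \<open>w \<in> S\<close> S by (simp add: subspace_add subspace_scale)
    have "l + 2 * t * (w \<bullet> w) + t\<^sup>2 * (w \<bullet> (G *v w)) = (v + t *\<^sub>R w) \<bullet> (G *v (v + t *\<^sub>R w))"
      by (simp add: l_def matrix_vector_right_distrib matrix_vector_mult_scaleR
          inner_add_left inner_add_right wGv power2_eq_square algebra_simps)
    also have "\<dots> \<le> l * (norm (v + t *\<^sub>R w))\<^sup>2"
      using max[OF \<open>v + t *\<^sub>R w \<in> S\<close>] by (simp add: l_def)
    also have "(norm (v + t *\<^sub>R w))\<^sup>2 = 1 + t\<^sup>2 * (w \<bullet> w)"
      unfolding power2_norm_eq_inner
      by (simp add: inner_add_left inner_add_right vv vw inner_commute[of w v] power2_eq_square)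
    finally show ?thesis by (simp add: algebra_simps)
  qed
  then have "w \<bullet> w = 0" by (rule quadratic_nonpos_imp_linear_coeff_zero)
  then show ?thesis unfolding w_def l_def by simp
qed

lemma symmetric_invariant_subspace_eigenbasis:
  fixes G :: "real^'n^'n"
  assumes sym: "symmetric_mat G"
  shows "subspace S \<Longrightarrow> (\<And>x. x \<in> S \<Longrightarrow> G *v x \<in> S) \<Longrightarrow> dim S = n \<Longrightarrow>
    \<exists>B \<subseteq> S. finite B \<and> card B = n \<and> pairwise orthogonal B \<and>
      (\<forall>b\<in>B. norm b = 1 \<and> (\<exists>l. G *v b = l *\<^sub>R b))"
proof (induction n arbitrary: S)
  case 0
  then show ?case by (intro exI[of _ "{}"]) auto
next
  case (Suc n)
  obtain y where "y \<in> S" "y \<noteq> 0" using Suc.prems(3) dim_eq_0[of S] by auto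
  then obtain v where v: "v \<in> S" "norm v = 1"
    and max: "\<And>x. x \<in> S \<Longrightarrow> x \<bullet> (G *v x) \<le> (v \<bullet> (G *v v)) * (norm x)\<^sup>2"
    using rayleigh_quotient_attains_max[OF Suc.prems(1)] by blast
  define l where "l = v \<bullet> (G *v v)"
  have ev: "G *v v = l *\<^sub>R v"
    unfolding l_def using rayleigh_max_is_eigenvector[OF sym Suc.prems(1,2) v max] .
  define S' where "S' = {y \<in> S. \<forall>x \<in> span {v}. orthogonal x y}"
  have S'_iff: "y \<in> S' \<longleftrightarrow> y \<in> S \<and> v \<bullet> y = 0" for y
  proof
    assume "y \<in> S \<and> v \<bullet> y = 0"
    then have "orthogonal y x" if "x \<in> span {v}" for x
      using orthogonal_to_span[OF that, of y] by (simp add: orthogonal_def inner_commute)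
    then show "y \<in> S'" using \<open>y \<in> S \<and> v \<bullet> y = 0\<close> by (simp add: S'_def orthogonal_commute)
  qed (simp add: S'_def orthogonal_def span_base)
  have "subspace S'"
    using Suc.prems(1) by (auto simp: subspace_def S'_iff inner_add_right)
  moreover have "G *v y \<in> S'" if "y \<in> S'" for y
  proof -
    have "v \<bullet> (G *v y) = l * (v \<bullet> y)"
      using ev inner_symmetric_mat[OF sym, of v y] by simp
    then show ?thesis using that Suc.prems(2) unfolding S'_iff by simp
  qed
  moreover have "dim S' = n"
  proof -
    have "v \<noteq> 0" using v by auto
    then have "dim (span {v}) = 1" by (simp add: dim_span dim_insert)
    moreover have "span {v} \<subseteq> S" using v Suc.prems(1) by (simp add: span_minimal)
    ultimately show ?thesis
      using dim_subspace_orthogonal_to_vectors[of "span {v}" S] Suc.prems(1,3)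
      unfolding S'_def by simp
  qed
  ultimately obtain B' where B': "B' \<subseteq> S'" "finite B'" "card B' = n" "pairwise orthogonal B'"
    "\<forall>b\<in>B'. norm b = 1 \<and> (\<exists>l. G *v b = l *\<^sub>R b)"
    using Suc.IH by blast
  have "v \<notin> S'" using v S'_iff by (auto simp: norm_eq_sqrt_inner)
  then have "v \<notin> B'" using B'(1) by blast
  show ?case
  proof (intro exI[of _ "insert v B'"] conjI)
    show "insert v B' \<subseteq> S" using B'(1) v S'_iff by auto
    show "finite (insert v B')" "card (insert v B') = Suc n"
      using B'(2,3) \<open>v \<notin> B'\<close> by simp_all
    show "pairwise orthogonal (insert v B')"
      using B'(1,4) S'_iff by (auto simp: pairwise_insert orthogonal_def inner_commute[of _ v])
    show "\<forall>b\<in>insert v B'. norm b = 1 \<and> (\<exists>l. G *v b = l *\<^sub>R b)"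
      using B'(5) v ev by auto
  qed
qed

lemma symmetric_mat_spectral_decomposition:
  fixes G :: "real^'n^'n"
  assumes "symmetric_mat G"
  shows "\<exists>V l. orthogonal_matrix V \<and> G = V ** diag_mat l ** transpose V"
proof -
  obtain B where B: "finite B" "card B = CARD('n)" "pairwise orthogonal B"
     "\<forall>b\<in>B. norm b = 1 \<and> (\<exists>l. G *v b = l *\<^sub>R b)"
    using symmetric_invariant_subspace_eigenbasis[OF assms, of UNIV "CARD('n)"] by auto
  obtain h where h: "bij_betw h (UNIV::'n set) B"
    using finite_same_card_bij[of "UNIV::'n set" B] B(1,2) by auto
  have "\<forall>i. \<exists>l. G *v h i = l *\<^sub>R h i" using B(4) bij_betwE[OF h] by blast
  then obtain l where ev: "G *v h i = l i *\<^sub>R h i" for i by metis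
  define V :: "real^'n^'n" where "V = (\<chi> r i. h i $ r)"
  have "h i \<bullet> h j = (if i = j then 1 else 0)" for i j
  proof (cases "i = j")
    case False
    then have "h i \<noteq> h j" using bij_betw_imp_inj_on[OF h] by (auto simp: inj_on_def)
    then show ?thesis using B(3) bij_betwE[OF h] False by (auto simp: pairwise_def orthogonal_def)
  qed (use B(4) bij_betwE[OF h] in \<open>auto simp: norm_eq_sqrt_inner\<close>)
  then have "transpose V ** V = mat 1"
    by (simp add: vec_eq_iff mat_def matrix_matrix_mult_def transpose_def V_def inner_vec_def)
  then have V: "orthogonal_matrix V" and VVt: "V ** transpose V = mat 1"
    by (auto simp: orthogonal_matrix_def dest: matrix_left_right_inverse[THEN iffD1])
  have "G ** V = V ** diag_mat l"
    using ev by (simp add: vec_eq_iff matrix_matrix_mult_def matrix_vector_mult_def diag_mat_def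
        V_def if_distrib[of "\<lambda>u. _ * u"] cong: if_cong)
  then have "G = V ** diag_mat l ** transpose V"
    by (metis VVt matrix_mul_assoc matrix_mul_rid)
  with V show ?thesis by blast
qed

text \<open>Polar decomposition H = R P with R orthogonal and P the square root of transpose H ** H,
  whose eigenvalues lie in [1 - e, 1]; then R - H = R (I - P).\<close>

lemma exists_orthogonal_near_almost_isometry:
  fixes H :: "real^'k^'k"
  assumes lo: "\<And>x. (1 - e) * (norm x)\<^sup>2 \<le> (norm (H *v x))\<^sup>2"
    and hi: "\<And>x. norm (H *v x) \<le> norm x" and "e < 1"
  shows "\<exists>R. orthogonal_matrix R \<and> spec_norm (R - H) \<le> e"
proof -
  obtain V l where V: "orthogonal_matrix V" and G: "transpose H ** H = V ** diag_mat l ** transpose V"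
    using symmetric_mat_spectral_decomposition[OF symmetric_mat_transpose_mult_self] by blast
  have VtV: "transpose V ** V = mat 1" using V by (simp add: orthogonal_matrix_def)
  have l_eq: "l i = (norm (H *v (V *v axis i 1)))\<^sup>2" for i
  proof -
    have "transpose V ** (V ** diag_mat l ** transpose V) ** V
        = (transpose V ** V) ** diag_mat l ** (transpose V ** V)"
      by (simp add: matrix_mul_assoc)
    then have "transpose V ** (transpose H ** H) ** V = diag_mat l" by (simp add: G VtV)
    then have "l i = axis i 1 \<bullet> ((transpose V ** (transpose H ** H) ** V) *v axis i 1)"
      by (simp add: diag_mat_axis)
    then show ?thesis
      by (simp add: power2_norm_eq_inner inner_matrix_vector_transpose matrix_vector_mul_assoc
          flip: matrix_vector_mul_assoc)
  qed
  have l_bounds: "1 - e \<le> l i" "l i \<le> 1" for i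
    using lo[of "V *v axis i 1"] hi[of "V *v axis i 1"]
    by (auto simp: l_eq norm_isometry_mult_vec[OF VtV] power_le_one)
  then have l_pos: "0 < l i" for i using \<open>e < 1\<close> by (meson diff_gt_0_iff_gt order_less_le_trans)
  have l_nz: "l i \<noteq> 0" for i using l_pos[of i] by simp
  define s where "s i = sqrt (l i)" for i
  define P where "P = V ** diag_mat s ** transpose V"
  define N where "N = V ** diag_mat (\<lambda>i. 1 / s i) ** transpose V"
  define R where "R = H ** N"
  have "transpose N = N" by (simp add: N_def matrix_transpose_mul matrix_mul_assoc)
  then have "transpose R ** R = N ** (transpose H ** H) ** N"
    by (simp add: R_def matrix_transpose_mul matrix_mul_assoc)
  also have "\<dots> = N ** (V ** diag_mat l ** transpose V) ** N" by (simp only: G)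
  also have "\<dots> = V ** diag_mat (\<lambda>_. 1) ** transpose V"
    unfolding N_def using l_pos
    by (simp add: orthogonal_conj_diag_mat_mult[OF V] s_def less_imp_le l_nz)
  finally have "orthogonal_matrix R"
    by (simp add: orthogonal_matrix orthogonal_conj_diag_mat_1[OF V])
  moreover have "norm ((R - H) *v x) \<le> e * norm x" for x
  proof -
    have "N ** P = mat 1"
      unfolding N_def P_def using l_pos
      by (simp add: orthogonal_conj_diag_mat_mult[OF V] s_def l_nz orthogonal_conj_diag_mat_1[OF V])
    then have "H *v x = R *v (P *v x)"
      unfolding R_def by (simp add: matrix_vector_mul_assoc flip: matrix_mul_assoc)
    then have "(R - H) *v x = R *v (x - P *v x)"
      by (simp add: matrix_vector_mult_diff_rdistrib matrix_vector_mult_diff_distrib)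
    also have "x - P *v x = (V ** diag_mat (\<lambda>i. 1 - s i) ** transpose V) *v x"
    proof -
      define y where "y = transpose V *v x"
      have "x = V *v y"
        using V by (simp add: y_def matrix_vector_mul_assoc orthogonal_matrix_def)
      moreover have "diag_mat (\<lambda>i. 1 - s i) *v y = y - diag_mat s *v y"
        by (simp add: diag_mat_mult_vec vec_eq_iff algebra_simps)
      ultimately show ?thesis
        by (simp add: P_def matrix_vector_mul_assoc[symmetric] matrix_vector_mult_diff_distrib
            isometry_mult_vec_cancel[OF VtV])
    qed
    finally have "norm ((R - H) *v x) = norm ((V ** diag_mat (\<lambda>i. 1 - s i) ** transpose V) *v x)"
      using \<open>orthogonal_matrix R\<close> by (simp add: norm_isometry_mult_vec orthogonal_matrix_def)
    also have "\<dots> \<le> e * norm x"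
    proof (rule norm_orthogonal_conj_diag_mat_le[OF V])
      fix i
      have "(l i)\<^sup>2 \<le> l i" using l_bounds[of i] l_pos[of i] by (simp add: power2_eq_square)
      then have "l i \<le> s i" "s i \<le> 1"
        using l_bounds[of i] unfolding s_def by (auto simp: real_le_rsqrt)
      then show "\<bar>1 - s i\<bar> \<le> e" using l_bounds[of i] by linarith
    qed
    finally show ?thesis .
  qed
  then have "spec_norm (R - H) \<le> e" by (rule spec_norm_le)
  ultimately show ?thesis by blast
qed

lemma spec_norm_le_sylvester:
  fixes Z :: "real^'m^'n"
  assumes a: "\<And>i. \<alpha> \<le> a i" and b: "\<And>j. 0 \<le> b j" and "0 < \<alpha>"
  shows "spec_norm Z \<le> spec_norm (diag_mat a ** Z + Z ** diag_mat b) / \<alpha>"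
proof -
  define C where "C = diag_mat a ** Z + Z ** diag_mat b"
  have quad: "x \<bullet> ((transpose Z ** Z) *v x) = (norm (Z *v x))\<^sup>2" for x
    by (simp add: power2_norm_eq_inner inner_matrix_vector_transpose matrix_vector_mul_assoc
        flip: matrix_vector_mul_assoc)
  obtain v where v: "norm v = 1" and max: "\<And>x. (norm (Z *v x))\<^sup>2 \<le> (norm (Z *v v))\<^sup>2 * (norm x)\<^sup>2"
    using rayleigh_quotient_attains_max[OF subspace_UNIV, where y = "axis undefined 1" and G = "transpose Z ** Z"]
    by (auto simp: quad axis_eq_0_iff)
  have ev: "(transpose Z ** Z) *v v = (norm (Z *v v))\<^sup>2 *\<^sub>R v"
    using rayleigh_max_is_eigenvector[OF symmetric_mat_transpose_mult_self[of Z] subspace_UNIV,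
        where v = v] v max
    by (simp add: quad)
  define \<mu> where "\<mu> = norm (Z *v v)"
  have "norm (Z *v x) \<le> \<mu> * norm x" for x
    using max[of x] unfolding \<mu>_def by (simp add: power_mult_distrib[symmetric] power2_le_iff_abs_le)
  then have Z_le: "spec_norm Z \<le> \<mu>" by (rule spec_norm_le)
  have "\<mu> \<le> spec_norm C / \<alpha>"
  proof (cases "\<mu> = 0")
    case True
    then show ?thesis using spec_norm_nonneg[of C] \<open>0 < \<alpha>\<close> by simp
  next
    case False
    then have "0 < \<mu>" unfolding \<mu>_def by simp
    define u where "u = (1 / \<mu>) *\<^sub>R (Z *v v)"
    have u: "norm u = 1" unfolding u_def using \<open>0 < \<mu>\<close> by (simp add: \<mu>_def)
    have Zv: "Z *v v = \<mu> *\<^sub>R u" unfolding u_def using \<open>0 < \<mu>\<close> by simp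
    have Ztu: "transpose Z *v u = \<mu> *\<^sub>R v"
      using ev \<open>0 < \<mu>\<close> unfolding u_def \<mu>_def[symmetric]
      by (simp add: matrix_vector_mult_scaleR matrix_vector_mul_assoc power2_eq_square)
    have "C *v v = diag_mat a *v (Z *v v) + Z *v (diag_mat b *v v)"
      by (simp add: C_def matrix_vector_mult_add_rdistrib flip: matrix_vector_mul_assoc)
    moreover have "u \<bullet> (Z *v (diag_mat b *v v)) = \<mu> * (v \<bullet> (diag_mat b *v v))"
      by (simp add: inner_commute[of u] inner_matrix_vector_transpose Ztu)
    ultimately have "u \<bullet> (C *v v) = \<mu> * (u \<bullet> (diag_mat a *v u)) + \<mu> * (v \<bullet> (diag_mat b *v v))"
      by (simp add: inner_add_right Zv matrix_vector_mult_scaleR)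
    moreover have "\<alpha> \<le> u \<bullet> (diag_mat a *v u)"
      using inner_diag_mat_ge[of \<alpha> a u, OF a] u by (simp add: norm_eq_sqrt_inner)
    moreover have "0 \<le> v \<bullet> (diag_mat b *v v)" using inner_diag_mat_ge[of 0 b v, OF b] by simp
    ultimately have "\<mu> * \<alpha> \<le> u \<bullet> (C *v v)"
      using \<open>0 < \<mu>\<close> by (smt (verit) mult_left_mono mult_nonneg_nonneg)
    also have "\<dots> \<le> spec_norm C"
      using norm_cauchy_schwarz[of u "C *v v"] norm_le_spec_norm[of C v] u v by simp
    finally show ?thesis using \<open>0 < \<alpha>\<close> by (simp add: field_simps)
  qed
  with Z_le show ?thesis unfolding C_def by linarith
qed

section \<open>Truncated singular value decompositions\<close>

lemma orthogonal_matrix_columns_inner: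
  "orthogonal_matrix P \<Longrightarrow> (\<Sum>r\<in>UNIV. P $ r $ i * P $ r $ j) = (if i = j then 1 else (0::real))"
proof -
  assume "orthogonal_matrix P"
  then have "(transpose P ** P) $ i $ j = mat 1 $ i $ j" by (simp add: orthogonal_matrix_def)
  then show ?thesis by (simp add: matrix_matrix_mult_def transpose_def mat_def)
qed

lemma trunc_svdE:
  assumes "trunc_svd A U D"
  obtains P Q s f where "orthogonal_matrix P" "orthogonal_matrix Q"
    "A = P ** diag_mat s ** transpose Q" "\<And>i. 0 \<le> s i" "inj f"
    "\<And>i j. i \<notin> range f \<Longrightarrow> s i \<le> s (f j)"
    "\<And>j r. Q $ r $ f j = P $ r $ f j" "\<And>j r. U $ r $ j = P $ r $ f j"
    "D = diag_mat (\<lambda>j. s (f j))"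
proof -
  obtain P Q S f where "orthogonal_matrix P" "orthogonal_matrix Q" and S: "diagonal_mat S"
    and "\<forall>i. 0 \<le> S $ i $ i" and A: "A = P ** S ** transpose Q" and "inj f"
    "\<forall>i j. i \<notin> range f \<longrightarrow> S $ i $ i \<le> S $ f j $ f j"
    "\<forall>j r. Q $ r $ f j = P $ r $ f j" "\<forall>j r. U $ r $ j = P $ r $ f j"
    "D = (\<chi> i j. if i = j then S $ f i $ f i else 0)"
    using assms unfolding trunc_svd_def by blast
  moreover have "A = P ** diag_mat (\<lambda>i. S $ i $ i) ** transpose Q"
    using A diagonal_mat_eq_diag_mat[OF S] by metis
  ultimately show ?thesis
    by (intro that[of P Q "\<lambda>i. S $ i $ i" f]) (simp_all add: diag_mat_def)
qed

lemma trunc_svd_isometry: "trunc_svd A U D \<Longrightarrow> transpose U ** U = mat 1"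
  by (erule trunc_svdE)
     (simp add: vec_eq_iff matrix_matrix_mult_def transpose_def mat_def
       orthogonal_matrix_columns_inner inj_eq)

lemma trunc_svd_diag: "trunc_svd A U D \<Longrightarrow> D = diag_mat (\<lambda>j. D $ j $ j)"
  by (erule trunc_svdE) (simp add: diag_mat_def)

lemma trunc_svd_eigen:
  assumes "trunc_svd A U D"
  shows "A ** U = U ** D"
proof -
  obtain P Q s f where P: "orthogonal_matrix P" and Q: "orthogonal_matrix Q"
    and A: "A = P ** diag_mat s ** transpose Q"
    and QP: "\<And>j r. Q $ r $ f j = P $ r $ f j" and UP: "\<And>j r. U $ r $ j = P $ r $ f j"
    and D: "D = diag_mat (\<lambda>j. s (f j))"
    using assms by (rule trunc_svdE) blast
  have "transpose Q ** U = (\<chi> i j. if i = f j then 1 else 0)"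
    by (simp add: vec_eq_iff matrix_matrix_mult_def transpose_def UP orthogonal_matrix_columns_inner[OF Q]
        flip: QP)
  then have "diag_mat s ** (transpose Q ** U) = (\<chi> i j. if i = f j then s (f j) else 0)"
    by (simp add: vec_eq_iff matrix_matrix_mult_def diag_mat_def
        if_distrib[of "\<lambda>u. u * _"] if_distrib[of "\<lambda>u. _ * u"] cong: if_cong)
  then have "A ** U = P ** (\<chi> i j. if i = f j then s (f j) else 0)"
    by (metis A matrix_mul_assoc)
  also have "\<dots> = U ** D"
    by (simp add: vec_eq_iff matrix_matrix_mult_def D diag_mat_def UP
        if_distrib[of "\<lambda>u. _ * u"] cong: if_cong)
  finally show ?thesis .
qed

lemma trunc_svd_norm_le_on_complement:
  assumes "trunc_svd A U D" and orth: "\<And>j. j \<noteq> j0 \<Longrightarrow> column j U \<bullet> x = 0"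
  shows "norm (A *v x) \<le> D $ j0 $ j0 * norm x"
proof -
  obtain P Q s f where P: "orthogonal_matrix P" and Q: "orthogonal_matrix Q"
    and A: "A = P ** diag_mat s ** transpose Q" and s: "\<And>i. 0 \<le> s i"
    and top: "\<And>i j. i \<notin> range f \<Longrightarrow> s i \<le> s (f j)"
    and QP: "\<And>j r. Q $ r $ f j = P $ r $ f j" and UP: "\<And>j r. U $ r $ j = P $ r $ f j"
    and D: "D = diag_mat (\<lambda>j. s (f j))"
    using assms(1) by (rule trunc_svdE) blast
  define y where "y = transpose Q *v x"
  have y_f: "y $ f j = column j U \<bullet> x" for j
    by (simp add: y_def column_def inner_vec_def matrix_vector_mult_def transpose_def UP QP)
  have "norm (A *v x) = norm (diag_mat s *v y)"
    using P by (simp add: A y_def matrix_vector_mul_assoc[symmetric] norm_isometry_mult_vec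
        orthogonal_matrix_def)
  also have "\<dots> \<le> s (f j0) * norm y"
  proof (rule norm_diag_mat_le_on_support[OF _ s])
    fix i assume "y $ i \<noteq> 0"
    show "\<bar>s i\<bar> \<le> s (f j0)"
    proof (cases "i \<in> range f")
      case True
      then obtain j where "i = f j" by auto
      with \<open>y $ i \<noteq> 0\<close> have "j = j0" using y_f orth by metis
      then show ?thesis using \<open>i = f j\<close> s by simp
    next
      case False
      then show ?thesis using top[OF False, of j0] s[of i] by simp
    qed
  qed
  also have "norm y = norm x"
    using Q by (simp add: y_def norm_isometry_mult_vec orthogonal_matrix_def)
  finally show ?thesis by (simp add: D diag_mat_def)
qed

lemma rank_mult_both_le: "rank (X ** Y ** Z) \<le> rank (Y :: real^'n^'m)"
  by (meson order_trans rank_mul_le_left rank_mul_le_right)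

text \<open>With exactly k nonzero singular values, the top-k selection carries all of them.\<close>

lemma trunc_svd_full_rank:
  fixes A :: "real^'d^'d" and U :: "real^'k^'d"
  assumes "trunc_svd A U D" and rank: "rank A = CARD('k)"
  shows "A = U ** D ** transpose U" and "\<And>j. 0 < D $ j $ j"
proof -
  obtain P Q s f where P: "orthogonal_matrix P" and Q: "orthogonal_matrix Q"
    and A: "A = P ** diag_mat s ** transpose Q" and s: "\<And>i. 0 \<le> s i" and f: "inj f"
    and top: "\<And>i j. i \<notin> range f \<Longrightarrow> s i \<le> s (f j)"
    and QP: "\<And>j r. Q $ r $ f j = P $ r $ f j" and UP: "\<And>j r. U $ r $ j = P $ r $ f j"
    and D: "D = diag_mat (\<lambda>j. s (f j))"
    using assms(1) by (rule trunc_svdE) blast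
  have "rank (diag_mat s) = rank A"
  proof (rule antisym)
    have "transpose P ** A ** Q = (transpose P ** P) ** diag_mat s ** (transpose Q ** Q)"
      by (simp add: A matrix_mul_assoc)
    then have "diag_mat s = transpose P ** A ** Q" using P Q by (simp add: orthogonal_matrix_def)
    then show "rank (diag_mat s) \<le> rank A" by (metis rank_mult_both_le)
    show "rank A \<le> rank (diag_mat s)" unfolding A by (rule rank_mult_both_le)
  qed
  then have card_support: "card {i. s i \<noteq> 0} = card (range f)"
    using rank f by (simp add: rank_diag_mat card_image)
  have pos: "0 < s (f j)" for j
  proof (rule ccontr)
    assume "\<not> 0 < s (f j)"
    then have "s (f j) = 0" using s[of "f j"] by simp
    have "{i. s i \<noteq> 0} \<subseteq> range f - {f j}"
    proof
      fix i assume "i \<in> {i. s i \<noteq> 0}"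
      then have "0 < s i" using s[of i] by auto
      then show "i \<in> range f - {f j}" using top[of i j] \<open>s (f j) = 0\<close> by fastforce
    qed
    then have "card {i. s i \<noteq> 0} < card (range f)"
      by (meson card_Diff1_less card_mono finite_Diff finite rangeI order_le_less_trans)
    then show False using card_support by simp
  qed
  then show "\<And>j. 0 < D $ j $ j" by (simp add: D diag_mat_def)
  have support: "{i. s i \<noteq> 0} = range f"
    using pos card_support by (intro card_subset_eq[symmetric]) (auto simp: less_le)
  have "A $ r $ c = (\<Sum>i\<in>UNIV. P $ r $ i * s i * Q $ c $ i)" for r c
    by (simp add: A matrix_matrix_mult_def diag_mat_def transpose_def sum_distrib_right
        if_distrib[of "\<lambda>u. _ * u"] if_distrib[of "\<lambda>u. u * _"] cong: if_cong)
  also have "\<dots> r c = (\<Sum>i\<in>range f. P $ r $ i * s i * Q $ c $ i)" for r c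
    using support by (intro sum.mono_neutral_right) auto
  also have "\<dots> r c = (\<Sum>j\<in>UNIV. P $ r $ f j * s (f j) * Q $ c $ f j)" for r c
    by (simp add: sum.reindex[OF inj_on_subset[OF f]])
  also have "\<dots> r c = (U ** D ** transpose U) $ r $ c" for r c
    by (simp add: matrix_matrix_mult_def D diag_mat_def transpose_def UP QP
        if_distrib[of "\<lambda>u. _ * u"] if_distrib[of "\<lambda>u. u * _"] cong: if_cong)
  finally show "A = U ** D ** transpose U" by (simp add: vec_eq_iff)
qed

lemma singular_values_isometric_diag:
  fixes U :: "real^'k^'d"
  assumes U: "transpose U ** U = mat 1" and d: "\<And>j. 0 < d j"
  shows "{s. 0 < s \<and> singular_value (U ** diag_mat d ** transpose U) s} = range d"
proof -
  define M where "M = U ** diag_mat d ** transpose U"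
  have "transpose M ** M = U ** (diag_mat d ** (transpose U ** U) ** diag_mat d) ** transpose U"
    by (simp add: M_def matrix_transpose_mul matrix_mul_assoc)
  then have MtM: "transpose M ** M = U ** diag_mat (\<lambda>j. (d j)\<^sup>2) ** transpose U"
    by (simp add: U diag_mat_mult_diag_mat power2_eq_square)
  have "singular_value M (d j)" for j
  proof -
    have "(transpose M ** M) *v (U *v axis j 1) = (d j)\<^sup>2 *\<^sub>R (U *v axis j 1)"
      by (simp add: MtM isometry_mult_vec_cancel[OF U] diag_mat_axis matrix_vector_mult_scaleR
          flip: matrix_vector_mul_assoc)
    moreover have "U *v axis j 1 \<noteq> 0"
      using norm_isometry_mult_vec[OF U, of "axis j 1"] by auto
    ultimately show ?thesis using d[of j] unfolding singular_value_def by (blast intro: less_imp_le)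
  qed
  moreover have "s \<in> range d" if "0 < s" and sv: "singular_value M s" for s
  proof -
    obtain v where "v \<noteq> 0" and ev: "(transpose M ** M) *v v = s\<^sup>2 *\<^sub>R v"
      using sv unfolding singular_value_def by blast
    define c where "c = transpose U *v v"
    have Uc: "U *v (diag_mat (\<lambda>j. (d j)\<^sup>2) *v c) = s\<^sup>2 *\<^sub>R v"
      using ev by (simp add: MtM c_def matrix_vector_mul_assoc matrix_mul_assoc)
    have "diag_mat (\<lambda>j. (d j)\<^sup>2) *v c = transpose U *v (U *v (diag_mat (\<lambda>j. (d j)\<^sup>2) *v c))"
      by (simp only: isometry_mult_vec_cancel[OF U])
    also have "\<dots> = s\<^sup>2 *\<^sub>R c"
      by (simp only: Uc) (simp add: c_def matrix_vector_mult_scaleR)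
    finally have diag_c: "diag_mat (\<lambda>j. (d j)\<^sup>2) *v c = s\<^sup>2 *\<^sub>R c" .
    have "c \<noteq> 0"
    proof
      assume "c = 0"
      then have "s\<^sup>2 *\<^sub>R v = 0" using Uc by simp
      then show False using \<open>v \<noteq> 0\<close> \<open>0 < s\<close> by simp
    qed
    then obtain j where "c $ j \<noteq> 0" by (auto simp: vec_eq_iff)
    with diag_c have "(d j)\<^sup>2 = s\<^sup>2" by (auto simp: vec_eq_iff diag_mat_mult_vec)
    then have "d j = s" using d[of j] \<open>0 < s\<close> by (simp add: power2_eq_iff)
    then show ?thesis by (metis rangeI)
  qed
  ultimately show ?thesis unfolding M_def by (auto intro: d)
qed

lemma sigma_min_isometric_diag:
  fixes U :: "real^'k^'d"
  assumes "transpose U ** U = mat 1" and "\<And>j. 0 < d j"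
  shows "sigma_min (U ** diag_mat d ** transpose U) = Min (range d)"
  unfolding sigma_min_def singular_values_isometric_diag[OF assms]
  by (simp add: cInf_eq_Min)

lemma diag_le_spec_norm_isometric_diag:
  fixes U :: "real^'k^'d"
  assumes U: "transpose U ** U = mat 1"
  shows "\<bar>d j\<bar> \<le> spec_norm (U ** diag_mat d ** transpose U)"
proof -
  have "(U ** diag_mat d ** transpose U) *v (U *v axis j 1) = d j *\<^sub>R (U *v axis j 1)"
    by (simp add: isometry_mult_vec_cancel[OF U] diag_mat_axis matrix_vector_mult_scaleR
        flip: matrix_vector_mul_assoc)
  then show ?thesis
    using norm_le_spec_norm[of "U ** diag_mat d ** transpose U" "U *v axis j 1"]
    by (simp add: norm_isometry_mult_vec[OF U])
qed

lemma exists_nonzero_in_range_orthogonal: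
  fixes U :: "real^'k^'d" and W :: "(real^'d) set"
  assumes U: "transpose U ** U = mat 1" and W: "finite W" "card W < CARD('k)"
  shows "\<exists>z. z \<noteq> 0 \<and> (\<forall>w\<in>W. w \<bullet> (U *v z) = 0)"
proof -
  define V1 where "V1 = {y. \<forall>x\<in>span W. orthogonal x y}"
  define V2 where "V2 = range ((*v) U)"
  have "dim {y \<in> UNIV. \<forall>x\<in>span W. orthogonal x y} + dim (span W) = dim (UNIV :: (real^'d) set)"
    by (rule dim_subspace_orthogonal_to_vectors) auto
  then have dim_V1: "dim V1 + dim (span W) = CARD('d)" unfolding V1_def by simp
  have "dim (span W) < CARD('k)"
    using dim_le_card'[OF W(1)] W(2) by (simp add: dim_span)
  have "inj ((*v) U)"
    by (rule inj_on_inverseI[of _ "(*v) (transpose U)"]) (simp add: isometry_mult_vec_cancel[OF U])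
  then have dim_V2: "dim V2 = CARD('k)"
    unfolding V2_def using dim_image_eq[of "(*v) U" UNIV] matrix_vector_mul_linear
    by (simp add: inj_on_def inj_def)
  have "subspace V1" unfolding V1_def by (rule subspace_orthogonal_to_vectors)
  moreover have "subspace V2"
    unfolding V2_def by (rule linear_subspace_image[OF matrix_vector_mul_linear subspace_UNIV])
  ultimately have "dim {x + y |x y. x \<in> V1 \<and> y \<in> V2} + dim (V1 \<inter> V2) = dim V1 + dim V2"
    by (rule dim_sums_Int)
  moreover have "dim {x + y |x y. x \<in> V1 \<and> y \<in> V2} \<le> CARD('d)" by (rule dim_subset_UNIV_cart)
  ultimately have "dim (V1 \<inter> V2) \<noteq> 0"
    using dim_V1 dim_V2 \<open>dim (span W) < CARD('k)\<close> by linarith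
  then obtain x where "x \<in> V1" "x \<in> V2" "x \<noteq> 0" using dim_eq_0[of "V1 \<inter> V2"] by auto
  from \<open>x \<in> V2\<close> obtain z where "x = U *v z" unfolding V2_def by auto
  with \<open>x \<noteq> 0\<close> have "z \<noteq> 0" by auto
  moreover have "w \<bullet> x = 0" if "w \<in> W" for w
    using \<open>x \<in> V1\<close> span_base[OF that] unfolding V1_def orthogonal_def by blast
  ultimately show ?thesis using \<open>x = U *v z\<close> by blast
qed

text \<open>Weyl's inequality via Courant-Fischer: some nonzero x in the range of U is orthogonal to
  all columns of Uh but the j0-th, so sigma |x| <= |M x| <= |Mh x| + eps |x| <= (c + eps) |x|.\<close>

lemma perturbed_eigenvalue_lower_bound:
  fixes M Mh :: "real^'d^'d" and U Uh :: "real^'k^'d"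
  assumes M: "M = U ** diag_mat d ** transpose U" and U: "transpose U ** U = mat 1"
    and d: "\<And>j. \<sigma> \<le> d j" and "0 \<le> \<sigma>"
    and Mh: "\<And>x. (\<And>j. j \<noteq> j0 \<Longrightarrow> column j Uh \<bullet> x = 0) \<Longrightarrow> norm (Mh *v x) \<le> c * norm x"
  shows "\<sigma> - spec_norm (Mh - M) \<le> c"
proof -
  define W where "W = (\<lambda>j. column j Uh) ` (UNIV - {j0})"
  have "card W < CARD('k)"
    unfolding W_def by (rule le_less_trans[OF card_image_le]) (simp_all add: card_Diff_singleton)
  then obtain z where "z \<noteq> 0" and "\<forall>w\<in>W. w \<bullet> (U *v z) = 0"
    using exists_nonzero_in_range_orthogonal[OF U _ \<open>card W < CARD('k)\<close>] by (auto simp: W_def)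
  then have z: "\<And>j. j \<noteq> j0 \<Longrightarrow> column j Uh \<bullet> (U *v z) = 0" by (simp add: W_def)
  define x where "x = U *v z"
  have "norm x = norm z" unfolding x_def by (rule norm_isometry_mult_vec[OF U])
  have "\<sigma> * norm x \<le> norm (M *v x)"
  proof -
    have "M *v x = U *v (diag_mat d *v z)"
      by (simp add: M x_def isometry_mult_vec_cancel[OF U] flip: matrix_vector_mul_assoc)
    then show ?thesis
      using norm_diag_mat_ge[of \<sigma> d z] d \<open>0 \<le> \<sigma>\<close> \<open>norm x = norm z\<close>
      by (simp add: norm_isometry_mult_vec[OF U]) (meson abs_ge_self order_trans)
  qed
  also have "M *v x = Mh *v x - (Mh - M) *v x" by (simp add: matrix_vector_mult_diff_rdistrib)
  also have "norm \<dots> \<le> norm (Mh *v x) + norm ((Mh - M) *v x)" by (rule norm_triangle_ineq4)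
  also have "\<dots> \<le> c * norm x + spec_norm (Mh - M) * norm x"
    using Mh[OF z] norm_le_spec_norm[of "Mh - M" x] unfolding x_def by (rule add_mono)
  finally have "(\<sigma> - spec_norm (Mh - M)) * norm x \<le> c * norm x" by (simp add: algebra_simps)
  then show ?thesis using \<open>z \<noteq> 0\<close> \<open>norm x = norm z\<close> by simp
qed

section \<open>Perturbation of the top eigenspace\<close>

lemma powr_minus_half: "0 \<le> x \<Longrightarrow> x powr - (1/2) = 1 / sqrt x"
  unfolding powr_minus by (simp only: powr_half_sqrt inverse_eq_divide)

lemma powr_three_halves: "0 \<le> x \<Longrightarrow> x powr (3/2) = x * sqrt x"
proof -
  assume "0 \<le> x"
  have "(3/2::real) = 1 + 1/2" by simp
  then have "x powr (3/2) = x powr 1 * x powr (1/2)"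
    by (simp only: powr_add)
  then show ?thesis using \<open>0 \<le> x\<close> by (simp add: powr_half_sqrt)
qed

text \<open>In the theorem, D = diag d and Dh = diag b. The singular values of H = U' Uh are the
  cosines of the principal angles between the two eigenspaces; Y is the part of Uh orthogonal
  to the range of U.\<close>

locale symmetric_perturbation =
  fixes M Mh :: "real^'d^'d" and U Uh :: "real^'k^'d" and d b :: "'k \<Rightarrow> real" and \<sigma> :: real
  assumes M_eq: "M = U ** diag_mat d ** transpose U"
    and U_isometry: "transpose U ** U = mat 1"
    and Uh_isometry: "transpose Uh ** Uh = mat 1"
    and Mh_Uh: "Mh ** Uh = Uh ** diag_mat b"
    and d_ge: "\<And>j. \<sigma> \<le> d j"
    and b_ge: "\<And>j. \<sigma> - spec_norm (Mh - M) \<le> b j"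
    and small: "4 * spec_norm (Mh - M) \<le> \<sigma>"
    and sigma_pos: "0 < \<sigma>"
begin

abbreviation "\<epsilon> \<equiv> spec_norm (Mh - M)"

definition "H = transpose U ** Uh"
definition "Y = Uh - U ** H"
definition "\<delta> = \<epsilon> / (\<sigma> - \<epsilon>)"

lemma eps_nonneg: "0 \<le> \<epsilon>"
  by (rule spec_norm_nonneg)

lemma gap_pos: "0 < \<sigma> - \<epsilon>"
  using small sigma_pos by linarith

lemma d_pos: "0 < d j"
  using d_ge[of j] sigma_pos by linarith

lemma b_pos: "0 < b j"
  using b_ge[of j] gap_pos by linarith

lemma H_mult_vec: "H *v x = transpose U *v (Uh *v x)"
  by (simp add: H_def matrix_vector_mul_assoc)

lemma Y_mult_vec: "Y *v x = Uh *v x - U *v (H *v x)"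
  by (simp add: Y_def matrix_vector_mult_diff_rdistrib matrix_vector_mul_assoc)

lemma Mh_Uh_mult_vec: "Mh *v (Uh *v x) = Uh *v (diag_mat b *v x)"
  by (simp add: matrix_vector_mul_assoc Mh_Uh)

lemma Uh_decomp: "Uh *v x = U *v (H *v x) + Y *v x"
  by (simp add: Y_def matrix_vector_mult_diff_rdistrib matrix_vector_mul_assoc)

lemma transpose_U_Y: "transpose U *v (Y *v x) = 0"
  by (simp add: Y_def H_def matrix_vector_mult_diff_rdistrib matrix_vector_mult_diff_distrib
      isometry_mult_vec_cancel[OF U_isometry] flip: matrix_vector_mul_assoc)

lemma norm_split: "(norm x)\<^sup>2 = (norm (H *v x))\<^sup>2 + (norm (Y *v x))\<^sup>2"
  using norm_isometry_add_orthogonal[OF U_isometry transpose_U_Y, of "H *v x" x]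
  by (simp flip: Uh_decomp add: norm_isometry_mult_vec[OF Uh_isometry])

text \<open>Y = (I - U U') Uh, and I - U U' annihilates M, so Y diag b = (I - U U') Mh Uh
  = (I - U U') (Mh - M) Uh.\<close>

lemma norm_Y_diag_b: "norm (Y *v (diag_mat b *v x)) \<le> \<epsilon> * norm x"
proof -
  define w where "w = (Mh - M) *v (Uh *v x)"
  have "M *v y - U *v (transpose U *v (M *v y)) = 0" for y
    by (simp add: M_eq isometry_mult_vec_cancel[OF U_isometry] flip: matrix_vector_mul_assoc)
  moreover have "Y *v (diag_mat b *v x) = Mh *v (Uh *v x) - U *v (transpose U *v (Mh *v (Uh *v x)))"
    by (simp only: Y_mult_vec H_mult_vec Mh_Uh_mult_vec)
  ultimately have "Y *v (diag_mat b *v x) = w - U *v (transpose U *v w)"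
    by (simp add: w_def matrix_vector_mult_diff_rdistrib matrix_vector_mult_diff_distrib algebra_simps)
  also have "norm \<dots> \<le> norm w" by (rule norm_isometry_proj_complement_le[OF U_isometry])
  also have "\<dots> \<le> \<epsilon> * norm x"
    using norm_le_spec_norm[of "Mh - M" "Uh *v x"] by (simp add: w_def norm_isometry_mult_vec[OF Uh_isometry])
  finally show ?thesis .
qed

lemma norm_Y_diag_le:
  assumes "\<And>j. \<bar>a j\<bar> \<le> c * b j"
  shows "norm (Y *v (diag_mat a *v x)) \<le> \<epsilon> * c * norm x"
proof -
  have "diag_mat a *v x = diag_mat b *v (diag_mat (\<lambda>j. a j / b j) *v x)"
    using b_pos by (simp add: diag_mat_mult_vec_diag_mat less_imp_neq[symmetric])
  then have "norm (Y *v (diag_mat a *v x)) \<le> \<epsilon> * norm (diag_mat (\<lambda>j. a j / b j) *v x)"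
    using norm_Y_diag_b by simp
  also have "\<dots> \<le> \<epsilon> * (c * norm x)"
  proof (intro mult_left_mono[OF _ eps_nonneg] norm_diag_mat_le)
    fix j show "\<bar>a j / b j\<bar> \<le> c"
      using assms[of j] b_pos[of j] by (simp add: abs_div abs_of_pos divide_le_eq)
  qed
  finally show ?thesis by (simp add: mult.assoc)
qed

lemma norm_Y_le: "norm (Y *v x) \<le> \<delta> * norm x"
proof -
  have "norm (Y *v (diag_mat (\<lambda>_. 1) *v x)) \<le> \<epsilon> * (1 / (\<sigma> - \<epsilon>)) * norm x"
  proof (rule norm_Y_diag_le)
    fix j show "\<bar>1\<bar> \<le> 1 / (\<sigma> - \<epsilon>) * b j"
      using b_ge[of j] gap_pos by (simp add: field_simps)
  qed
  then show ?thesis by (simp add: diag_mat_1 \<delta>_def)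
qed

lemma delta_nonneg: "0 \<le> \<delta>"
  using eps_nonneg gap_pos by (simp add: \<delta>_def)

lemma delta_le: "\<delta> \<le> 1 / 3"
  unfolding \<delta>_def using small gap_pos by (simp add: field_simps)

lemma exists_rotation_near_H: "\<exists>R. orthogonal_matrix R \<and> spec_norm (R - H) \<le> \<delta>\<^sup>2"
proof (rule exists_orthogonal_near_almost_isometry)
  fix x
  have "(norm (Y *v x))\<^sup>2 \<le> (\<delta> * norm x)\<^sup>2"
    by (rule power_mono[OF norm_Y_le]) simp
  then show "(1 - \<delta>\<^sup>2) * (norm x)\<^sup>2 \<le> (norm (H *v x))\<^sup>2"
    using norm_split[of x] unfolding power_mult_distrib left_diff_distrib by linarith
  have "(norm (H *v x))\<^sup>2 \<le> (norm x)\<^sup>2"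
    using norm_split[of x] zero_le_power2[of "norm (Y *v x)"] by linarith
  then show "norm (H *v x) \<le> norm x" by (rule power2_le_imp_le) simp
next
  have "\<delta>\<^sup>2 \<le> (1/3)\<^sup>2" using delta_le delta_nonneg by (rule power_mono)
  then show "\<delta>\<^sup>2 < 1" by (simp add: power2_eq_square)
qed

definition "r = sqrt \<sigma>"
definition "t = sqrt (\<sigma> - \<epsilon>)"
definition "p j = sqrt (d j)"
definition "q j = sqrt (b j)"
definition "Z = diag_mat p ** H - H ** diag_mat q"

lemma r_pos: "0 < r"
  using sigma_pos by (simp add: r_def)

lemma r_mult_r: "r * r = \<sigma>"
  using sigma_pos by (simp add: r_def)

lemma t_pos: "0 < t"
  using gap_pos by (simp add: t_def)

lemma r_le_p: "r \<le> p j"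
  using d_ge[of j] by (simp add: r_def p_def)

lemma t_le_q: "t \<le> q j"
  using b_ge[of j] by (simp add: t_def q_def)

lemma p_mult_p: "p j * p j = d j"
  using d_pos[of j] by (simp add: p_def)

lemma q_mult_q: "q j * q j = b j"
  using b_pos[of j] by (simp add: q_def)

lemma p_pos: "0 < p j"
  using r_pos r_le_p[of j] by linarith

lemma q_pos: "0 < q j"
  using t_pos t_le_q[of j] by linarith

lemma Z_mult_vec: "Z *v x = diag_mat p *v (H *v x) - H *v (diag_mat q *v x)"
  by (simp add: Z_def matrix_vector_mult_diff_rdistrib matrix_vector_mul_assoc)

text \<open>Z = D^(1/2) H - H Dh^(1/2) solves a Sylvester equation whose right-hand side
  D H - H Dh = U' (M - Mh) Uh has norm at most eps.\<close>

lemma spec_norm_Z: "spec_norm Z \<le> \<epsilon> / r"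
proof -
  define C where "C = diag_mat p ** Z + Z ** diag_mat q"
  have "C *v x = diag_mat d *v (H *v x) - H *v (diag_mat b *v x)" for x
    by (simp add: C_def matrix_vector_mult_add_rdistrib Z_mult_vec matrix_vector_mult_diff_distrib
        diag_mat_mult_vec_diag_mat p_mult_p q_mult_q flip: matrix_vector_mul_assoc)
  also have "diag_mat d *v (H *v x) - H *v (diag_mat b *v x)
      = - (transpose U *v ((Mh - M) *v (Uh *v x)))" for x
    by (simp add: M_eq H_mult_vec isometry_mult_vec_cancel[OF U_isometry] matrix_vector_mult_diff_rdistrib
        matrix_vector_mult_diff_distrib flip: Mh_Uh_mult_vec matrix_vector_mul_assoc)
  finally have "norm (C *v x) \<le> \<epsilon> * norm x" for x
    using norm_isometry_transpose_mult_vec_le[OF U_isometry, of "(Mh - M) *v (Uh *v x)"]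
      norm_le_spec_norm[of "Mh - M" "Uh *v x"]
    by (simp add: norm_isometry_mult_vec[OF Uh_isometry])
  then have "spec_norm C \<le> \<epsilon>" by (rule spec_norm_le)
  moreover have "spec_norm Z \<le> spec_norm C / r"
    unfolding C_def by (rule spec_norm_le_sylvester[OF r_le_p less_imp_le[OF q_pos] r_pos])
  ultimately show ?thesis using r_pos by (meson divide_right_mono order_trans less_imp_le)
qed

lemma inverse_t_le: "1 / t \<le> 5 / 4 * (1 / r)"
proof -
  have "(4 / 5 * r)\<^sup>2 = 16 / 25 * \<sigma>"
    using sigma_pos by (simp add: power_mult_distrib r_def power2_eq_square)
  also have "\<dots> \<le> t\<^sup>2"
    using small gap_pos by (simp add: t_def)
  finally have "4 / 5 * r \<le> t"
    using t_pos by (rule power2_le_imp_le[OF _ less_imp_le])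
  then have "1 / t \<le> 1 / (4 / 5 * r)"
    by (rule divide_left_mono) (use r_pos t_pos in auto)
  then show ?thesis by simp
qed

lemma delta_sq_le: "\<delta>\<^sup>2 \<le> 4 / 9 * (\<epsilon> / \<sigma>)"
proof -
  have "\<delta>\<^sup>2 = \<epsilon> * \<epsilon> / (\<sigma> - \<epsilon>)\<^sup>2"
    by (simp add: \<delta>_def power_divide power2_eq_square)
  also have "\<dots> \<le> \<epsilon> * \<epsilon> / (3 / 4 * \<sigma>)\<^sup>2"
    using small sigma_pos by (simp add: frac_le power_mono)
  also have "\<dots> = 16 / 9 * (\<epsilon> / \<sigma>) * (\<epsilon> / \<sigma>)"
    by (simp add: power2_eq_square)
  also have "\<dots> \<le> 16 / 9 * (\<epsilon> / \<sigma>) * (1 / 4)"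
    using mult_left_mono[OF small eps_nonneg] sigma_pos by (simp add: divide_le_eq algebra_simps)
  finally show ?thesis by simp
qed

lemma p_nonzero: "p j \<noteq> 0" and q_nonzero: "q j \<noteq> 0"
  using p_pos[of j] q_pos[of j] by auto

lemma H_diag_q: "H *v (diag_mat q *v x) = diag_mat p *v (H *v x) - Z *v x"
  by (simp add: Z_mult_vec)

lemma H_diag_inverse_q:
  "H *v (diag_mat (\<lambda>j. 1 / q j) *v x) = diag_mat (\<lambda>j. 1 / p j) *v (H *v x)
    + diag_mat (\<lambda>j. 1 / p j) *v (Z *v (diag_mat (\<lambda>j. 1 / q j) *v x))"
  by (simp add: Z_mult_vec matrix_vector_mult_diff_distrib diag_mat_mult_vec_diag_mat
      p_nonzero q_nonzero diag_mat_1)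

lemma norm_diag_inverse_p_le: "norm (diag_mat (\<lambda>j. 1 / p j) *v x) \<le> 1 / r * norm x"
proof (rule norm_diag_mat_le)
  fix j show "\<bar>1 / p j\<bar> \<le> 1 / r"
    using r_pos r_le_p[of j] p_pos[of j] by (simp add: abs_of_pos frac_le)
qed

lemma norm_diag_inverse_q_le: "norm (diag_mat (\<lambda>j. 1 / q j) *v x) \<le> 1 / t * norm x"
proof (rule norm_diag_mat_le)
  fix j show "\<bar>1 / q j\<bar> \<le> 1 / t"
    using t_pos t_le_q[of j] q_pos[of j] by (simp add: abs_of_pos frac_le)
qed

lemma norm_Y_diag_inverse_q_le:
  "norm (Y *v (diag_mat (\<lambda>j. 1 / q j) *v x)) \<le> \<epsilon> * (1 / t) ^ 3 * norm x"
proof (rule norm_Y_diag_le)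
  fix j
  have "t ^ 3 \<le> q j ^ 3" using t_pos t_le_q[of j] by (simp add: power_mono)
  then show "\<bar>1 / q j\<bar> \<le> (1 / t) ^ 3 * b j"
    using t_pos q_pos[of j] by (simp add: q_mult_q[symmetric] field_simps power3_eq_cube)
qed

lemma norm_Y_diag_q_le: "norm (Y *v (diag_mat q *v x)) \<le> \<epsilon> * (1 / t) * norm x"
proof (rule norm_Y_diag_le)
  fix j
  show "\<bar>q j\<bar> \<le> 1 / t * b j"
    using t_pos q_pos[of j] t_le_q[of j]
    by (simp add: q_mult_q[symmetric] field_simps mult_right_mono)
qed

lemma norm_Z_le: "norm (Z *v x) \<le> \<epsilon> / r * norm x"
  by (rule norm_le_spec_norm_bound[OF spec_norm_Z])

lemma sigma_powr_three_halves: "\<sigma> powr (3/2) = r * r * r"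
  using sigma_pos by (simp add: powr_three_halves r_def)

lemma p_le_sqrt_spec_norm: "p j \<le> sqrt (spec_norm M)"
  using diag_le_spec_norm_isometric_diag[OF U_isometry, of d j] d_pos[of j]
  by (simp add: p_def M_eq)

lemma r_le_sqrt_spec_norm: "r \<le> sqrt (spec_norm M)"
  using r_le_p p_le_sqrt_spec_norm by (rule order_trans)

context
  fixes R :: "real^'k^'k"
  assumes R_orth: "orthogonal_matrix R" and R_near: "spec_norm (R - H) \<le> \<delta>\<^sup>2"
begin

lemma norm_R_minus_H_le: "norm ((R - H) *v x) \<le> \<delta>\<^sup>2 * norm x"
  by (rule norm_le_spec_norm_bound[OF R_near])

lemma W_minus_Wh_mult_vec:
  "(U ** diag_mat (\<lambda>j. 1 / p j) ** R - Uh ** diag_mat (\<lambda>j. 1 / q j)) *v x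
    = U *v (diag_mat (\<lambda>j. 1 / p j) *v ((R - H) *v x)
        - diag_mat (\<lambda>j. 1 / p j) *v (Z *v (diag_mat (\<lambda>j. 1 / q j) *v x)))
      - Y *v (diag_mat (\<lambda>j. 1 / q j) *v x)"
proof -
  have "(U ** diag_mat (\<lambda>j. 1 / p j) ** R - Uh ** diag_mat (\<lambda>j. 1 / q j)) *v x
      = U *v (diag_mat (\<lambda>j. 1 / p j) *v (R *v x)) - Uh *v (diag_mat (\<lambda>j. 1 / q j) *v x)"
    by (simp add: matrix_vector_mult_diff_rdistrib matrix_vector_mul_assoc matrix_mul_assoc)
  also have "Uh *v (diag_mat (\<lambda>j. 1 / q j) *v x)
      = U *v (H *v (diag_mat (\<lambda>j. 1 / q j) *v x)) + Y *v (diag_mat (\<lambda>j. 1 / q j) *v x)"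
    by (rule Uh_decomp)
  finally show ?thesis
    by (simp add: H_diag_inverse_q matrix_vector_mult_diff_rdistrib matrix_vector_mult_diff_distrib
        matrix_vector_right_distrib algebra_simps)
qed

lemma spec_norm_W_minus_Wh:
  "spec_norm (U ** diag_mat (\<lambda>j. 1 / p j) ** R - Uh ** diag_mat (\<lambda>j. 1 / q j))
    \<le> 5 * \<epsilon> / \<sigma> powr (3/2)"
proof -
  define k where "k = \<epsilon> / (r * r * r)"
  have "norm ((U ** diag_mat (\<lambda>j. 1 / p j) ** R - Uh ** diag_mat (\<lambda>j. 1 / q j)) *v x)
      \<le> (1 / r * \<delta>\<^sup>2 + 1 / r * (\<epsilon> / r * (1 / t)) + \<epsilon> * (1 / t) ^ 3) * norm x" for x
  proof -
    have "norm (diag_mat (\<lambda>j. 1 / p j) *v ((R - H) *v x)) \<le> 1 / r * (\<delta>\<^sup>2 * norm x)"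
      using norm_diag_inverse_p_le norm_R_minus_H_le r_pos
      by (meson divide_nonneg_pos mult_left_mono order_trans zero_le_one)
    moreover have "norm (diag_mat (\<lambda>j. 1 / p j) *v (Z *v (diag_mat (\<lambda>j. 1 / q j) *v x)))
        \<le> 1 / r * (\<epsilon> / r * (1 / t * norm x))"
      using norm_diag_inverse_p_le norm_Z_le norm_diag_inverse_q_le r_pos eps_nonneg
      by (meson divide_nonneg_pos mult_left_mono order_trans zero_le_one)
    moreover note norm_Y_diag_inverse_q_le[of x]
    ultimately show ?thesis
      using norm_isometry_diff_le[OF U_isometry, of "diag_mat (\<lambda>j. 1 / p j) *v ((R - H) *v x)"
          "diag_mat (\<lambda>j. 1 / p j) *v (Z *v (diag_mat (\<lambda>j. 1 / q j) *v x))"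
          "Y *v (diag_mat (\<lambda>j. 1 / q j) *v x)"]
      unfolding W_minus_Wh_mult_vec distrib_right mult.assoc by linarith
  qed
  then have "spec_norm (U ** diag_mat (\<lambda>j. 1 / p j) ** R - Uh ** diag_mat (\<lambda>j. 1 / q j))
      \<le> 1 / r * \<delta>\<^sup>2 + 1 / r * (\<epsilon> / r * (1 / t)) + \<epsilon> * (1 / t) ^ 3"
    by (rule spec_norm_le)
  also have "\<dots> \<le> 4 / 9 * k + 5 / 4 * k + 125 / 64 * k"
  proof -
    have "1 / r * \<delta>\<^sup>2 \<le> 1 / r * (4 / 9 * (\<epsilon> / (r * r)))"
      using delta_sq_le r_pos unfolding r_mult_r by (intro mult_left_mono) auto
    moreover have "1 / r * (\<epsilon> / r * (1 / t)) \<le> 1 / r * (\<epsilon> / r * (5 / 4 * (1 / r)))"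
      using inverse_t_le r_pos eps_nonneg by (intro mult_left_mono) auto
    moreover have "\<epsilon> * (1 / t) ^ 3 \<le> \<epsilon> * (5 / 4 * (1 / r)) ^ 3"
      using inverse_t_le t_pos eps_nonneg by (intro mult_left_mono power_mono) auto
    moreover have "1 / r * (4 / 9 * (\<epsilon> / (r * r))) = 4 / 9 * k"
      "1 / r * (\<epsilon> / r * (5 / 4 * (1 / r))) = 5 / 4 * k"
      "\<epsilon> * (5 / 4 * (1 / r)) ^ 3 = 125 / 64 * k"
      by (simp_all add: k_def power3_eq_cube)
    ultimately show ?thesis by linarith
  qed
  also have "\<dots> \<le> 5 * k"
  proof -
    have "0 \<le> k" using eps_nonneg r_pos by (simp add: k_def)
    then show ?thesis by linarith
  qed
  also have "5 * k = 5 * \<epsilon> / \<sigma> powr (3/2)"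
    by (simp add: k_def sigma_powr_three_halves)
  finally show ?thesis .
qed

lemma BtW_mult_vec:
  "(transpose (U ** diag_mat p ** R) ** (U ** diag_mat (\<lambda>j. 1 / p j) ** R - Uh ** diag_mat (\<lambda>j. 1 / q j))) *v x
    = transpose R *v ((R - H) *v x - Z *v (diag_mat (\<lambda>j. 1 / q j) *v x))"
proof -
  have "(transpose (U ** diag_mat p ** R) ** A) *v x = transpose R *v (diag_mat p *v (transpose U *v (A *v x)))"
    for A :: "real^'k^'d"
    by (simp add: matrix_transpose_mul matrix_vector_mul_assoc matrix_mul_assoc)
  moreover have "diag_mat p *v (diag_mat (\<lambda>j. 1 / p j) *v y) = y" for y
    by (simp add: diag_mat_mult_vec_diag_mat p_nonzero diag_mat_1)
  ultimately show ?thesis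
    by (simp add: W_minus_Wh_mult_vec matrix_vector_mult_diff_distrib transpose_U_Y
        isometry_mult_vec_cancel[OF U_isometry])
qed

lemma spec_norm_BtW:
  "spec_norm (transpose (U ** diag_mat p ** R) **
      (U ** diag_mat (\<lambda>j. 1 / p j) ** R - Uh ** diag_mat (\<lambda>j. 1 / q j))) \<le> 3 * \<epsilon> / \<sigma>"
proof -
  have Rt: "transpose (transpose R) ** transpose R = mat 1"
    using R_orth by (simp add: orthogonal_matrix_def)
  have "norm ((transpose (U ** diag_mat p ** R) **
      (U ** diag_mat (\<lambda>j. 1 / p j) ** R - Uh ** diag_mat (\<lambda>j. 1 / q j))) *v x)
      \<le> (\<delta>\<^sup>2 + \<epsilon> / r * (1 / t)) * norm x" for x
  proof -
    have "norm (Z *v (diag_mat (\<lambda>j. 1 / q j) *v x)) \<le> \<epsilon> / r * (1 / t * norm x)"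
      using eps_nonneg r_pos
      by (intro order_trans[OF norm_Z_le mult_left_mono[OF norm_diag_inverse_q_le]]) simp
    then show ?thesis
      using norm_triangle_ineq4[of "(R - H) *v x" "Z *v (diag_mat (\<lambda>j. 1 / q j) *v x)"]
        norm_R_minus_H_le[of x]
      unfolding BtW_mult_vec norm_isometry_mult_vec[OF Rt] distrib_right mult.assoc by linarith
  qed
  then have "spec_norm (transpose (U ** diag_mat p ** R) **
      (U ** diag_mat (\<lambda>j. 1 / p j) ** R - Uh ** diag_mat (\<lambda>j. 1 / q j))) \<le> \<delta>\<^sup>2 + \<epsilon> / r * (1 / t)"
    by (rule spec_norm_le)
  also have "\<dots> \<le> 4 / 9 * (\<epsilon> / \<sigma>) + 5 / 4 * (\<epsilon> / \<sigma>)"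
  proof -
    have "\<epsilon> / r * (1 / t) \<le> \<epsilon> / r * (5 / 4 * (1 / r))"
      using inverse_t_le r_pos eps_nonneg by (intro mult_left_mono) auto
    also have "\<epsilon> / r * (5 / 4 * (1 / r)) = 5 / 4 * (\<epsilon> / (r * r))" by simp
    finally show ?thesis using delta_sq_le unfolding r_mult_r by linarith
  qed
  also have "\<dots> \<le> 3 * \<epsilon> / \<sigma>"
  proof -
    have "0 \<le> \<epsilon> / \<sigma>" using eps_nonneg sigma_pos by simp
    then show ?thesis by linarith
  qed
  finally show ?thesis .
qed

lemma B_minus_Bh_mult_vec:
  "(U ** diag_mat p ** R - Uh ** diag_mat q) *v x
    = U *v (diag_mat p *v ((R - H) *v x) - - (Z *v x)) - Y *v (diag_mat q *v x)"
proof -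
  have "(U ** diag_mat p ** R - Uh ** diag_mat q) *v x
      = U *v (diag_mat p *v (R *v x)) - Uh *v (diag_mat q *v x)"
    by (simp add: matrix_vector_mult_diff_rdistrib matrix_vector_mul_assoc matrix_mul_assoc)
  then show ?thesis
    by (simp add: Uh_decomp H_diag_q matrix_vector_mult_diff_rdistrib matrix_vector_mult_diff_distrib
        matrix_vector_right_distrib algebra_simps)
qed

lemma spec_norm_B_minus_Bh:
  "spec_norm (U ** diag_mat p ** R - Uh ** diag_mat q) \<le> 3 * \<epsilon> * sqrt (spec_norm M) / \<sigma>"
proof -
  define s where "s = sqrt (spec_norm M)"
  have "s \<ge> 0" using r_pos r_le_sqrt_spec_norm unfolding s_def by linarith
  have "norm ((U ** diag_mat p ** R - Uh ** diag_mat q) *v x)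
      \<le> (s * \<delta>\<^sup>2 + \<epsilon> / r + \<epsilon> * (1 / t)) * norm x" for x
  proof -
    have "norm (diag_mat p *v ((R - H) *v x)) \<le> s * (\<delta>\<^sup>2 * norm x)"
    proof (rule order_trans[OF norm_diag_mat_le mult_left_mono[OF norm_R_minus_H_le \<open>s \<ge> 0\<close>]])
      fix j show "\<bar>p j\<bar> \<le> s"
        using p_pos[of j] p_le_sqrt_spec_norm[of j] by (simp add: s_def)
    qed
    then show ?thesis
      using norm_isometry_diff_le[OF U_isometry, of "diag_mat p *v ((R - H) *v x)" "- (Z *v x)"
          "Y *v (diag_mat q *v x)"] norm_Z_le[of x] norm_Y_diag_q_le[of x]
      unfolding B_minus_Bh_mult_vec norm_minus_cancel distrib_right mult.assoc by linarith
  qed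
  then have "spec_norm (U ** diag_mat p ** R - Uh ** diag_mat q) \<le> s * \<delta>\<^sup>2 + \<epsilon> / r + \<epsilon> * (1 / t)"
    by (rule spec_norm_le)
  also have "\<dots> \<le> 4 / 9 * (\<epsilon> * s / \<sigma>) + \<epsilon> * s / \<sigma> + 5 / 4 * (\<epsilon> * s / \<sigma>)"
  proof -
    have "s * \<delta>\<^sup>2 \<le> s * (4 / 9 * (\<epsilon> / \<sigma>))"
      using delta_sq_le \<open>s \<ge> 0\<close> by (rule mult_left_mono)
    moreover have "\<epsilon> / r \<le> \<epsilon> * s / \<sigma>"
    proof -
      have "\<epsilon> / r = \<epsilon> * r / (r * r)" using r_pos by simp
      also have "\<dots> \<le> \<epsilon> * s / (r * r)"
        using r_le_sqrt_spec_norm eps_nonneg r_pos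
        by (intro divide_right_mono mult_left_mono) (auto simp: s_def)
      finally show ?thesis by (simp only: r_mult_r)
    qed
    moreover have "\<epsilon> * (1 / t) \<le> 5 / 4 * (\<epsilon> / r)"
      using mult_left_mono[OF inverse_t_le eps_nonneg] by simp
    ultimately show ?thesis by (simp add: algebra_simps)
  qed
  also have "\<dots> \<le> 3 * \<epsilon> * sqrt (spec_norm M) / \<sigma>"
  proof -
    have "0 \<le> \<epsilon> * s / \<sigma>" using eps_nonneg sigma_pos \<open>s \<ge> 0\<close> by simp
    then show ?thesis unfolding s_def by linarith
  qed
  finally show ?thesis .
qed

end

lemma perturbation_bounds:
  "\<exists>R. orthogonal_matrix R \<and>
    (let W = U ** diag_mat (\<lambda>j. 1 / sqrt (d j)) ** R;
         Wh = Uh ** diag_mat (\<lambda>j. 1 / sqrt (b j));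
         B = U ** diag_mat (\<lambda>j. sqrt (d j)) ** R;
         Bh = Uh ** diag_mat (\<lambda>j. sqrt (b j))
     in spec_norm (W - Wh) \<le> 5 * \<epsilon> / \<sigma> powr (3/2) \<and>
        spec_norm (transpose B ** (W - Wh)) \<le> 3 * \<epsilon> / \<sigma> \<and>
        spec_norm (B - Bh) \<le> 3 * \<epsilon> * sqrt (spec_norm M) / \<sigma>)"
proof -
  obtain R where R: "orthogonal_matrix R" "spec_norm (R - H) \<le> \<delta>\<^sup>2"
    using exists_rotation_near_H by blast
  have p_eq: "p = (\<lambda>j. sqrt (d j))" and q_eq: "q = (\<lambda>j. sqrt (b j))"
    by (simp_all add: fun_eq_iff p_def q_def)
  show ?thesis
    using R spec_norm_W_minus_Wh[OF R] spec_norm_BtW[OF R] spec_norm_B_minus_Bh[OF R]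
    unfolding Let_def p_eq q_eq by blast
qed

end

theorem lemma3p13:
  fixes M Mh :: "real^'d^'d" and U Uh :: "real^'k^'d" and D Dh :: "real^'k^'k"
  assumes "psd_mat M"
    and "rank M = CARD('k)"
    and "symmetric_mat Mh"
    and "spec_norm (Mh - M) \<le> sigma_min M / 4"
    and "trunc_svd M U D"
    and "trunc_svd Mh Uh Dh"
  shows "\<exists>R::real^'k^'k. orthogonal_matrix R \<and>
    (let \<epsilon> = spec_norm (Mh - M);
         W = U ** diag_powr D (-1/2) ** R;
         Wh = Uh ** diag_powr Dh (-1/2);
         B = U ** diag_powr D (1/2) ** R;
         Bh = Uh ** diag_powr Dh (1/2)
     in spec_norm (W - Wh) \<le> 5 * \<epsilon> / sigma_min M powr (3/2) \<and>
        spec_norm (transpose B ** (W - Wh)) \<le> 3 * \<epsilon> / sigma_min M \<and>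
        spec_norm (B - Bh) \<le> 3 * \<epsilon> * sqrt (spec_norm M) / sigma_min M)"
proof -
  define d where "d = (\<lambda>j. D $ j $ j)"
  define b where "b = (\<lambda>j. Dh $ j $ j)"
  have U: "transpose U ** U = mat 1" and M: "M = U ** diag_mat d ** transpose U"
    and d_pos: "\<And>j. 0 < d j" and D: "D = diag_mat d"
    using trunc_svd_isometry[OF assms(5)] trunc_svd_full_rank[OF assms(5,2)] trunc_svd_diag[OF assms(5)]
    by (simp_all add: d_def)
  have "sigma_min M = Min (range d)"
    using sigma_min_isometric_diag[OF U d_pos] by (simp add: M)
  then have d_ge: "\<And>j. sigma_min M \<le> d j" and sigma_pos: "0 < sigma_min M"
    using d_pos by auto
  have b_ge: "sigma_min M - spec_norm (Mh - M) \<le> b j" for j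
    unfolding b_def
    by (rule perturbed_eigenvalue_lower_bound[OF M U d_ge less_imp_le[OF sigma_pos]])
      (rule trunc_svd_norm_le_on_complement[OF assms(6)])
  interpret symmetric_perturbation M Mh U Uh d b "sigma_min M"
    using M U trunc_svd_isometry[OF assms(6)] trunc_svd_eigen[OF assms(6)] trunc_svd_diag[OF assms(6)]
      d_ge b_ge assms(4) sigma_pos
    by unfold_locales (simp_all add: b_def)
  have powers: "diag_powr D (1/2) = diag_mat (\<lambda>j. sqrt (d j))"
    "diag_powr D (-1/2) = diag_mat (\<lambda>j. 1 / sqrt (d j))"
    "diag_powr Dh (1/2) = diag_mat (\<lambda>j. sqrt (b j))"
    "diag_powr Dh (-1/2) = diag_mat (\<lambda>j. 1 / sqrt (b j))"
    using d_pos b_pos trunc_svd_diag[OF assms(6)]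
    by (simp_all add: D b_def[symmetric] diag_powr_diag_mat powr_half_sqrt powr_minus_half less_imp_le)
  show ?thesis
    using perturbation_bounds by (simp only: Let_def powers)
qed

end
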